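(* Let $\langle\mathcal{X},\mathsf{cap},\mathsf{rf}\rangle$ be a $\textsf{VCh-rf}$ instance with $\mathcal{X}=\langle\mathsf{S},\mathsf{po}\rangle$ in which every channel is synchronous, and suppose every send event of $\mathsf{S}$ is related by $\mathsf{rf}$ to exactly one receive event, every receive event of $\mathsf{S}$ is related by $\mathsf{rf}$ to exactly one send event, and for every $(s,r)\in\mathsf{rf}$ the events $s$ and $r$ belong to different threads. Then $\langle\mathcal{X},\mathsf{cap},\mathsf{rf}\rangle$ is consistent if and only if its send-receive graph $G_{\mathsf{sync}}$ is acyclic.
   Context: Channels and events. Each channel $\mathtt{ch}$ has a capacity $\mathsf{cap}(\mathtt{ch})\in\mathbb{N}$; $\mathtt{ch}$ is synchronous if $\mathsf{cap}(\mathtt{ch})=0$ and asynchronous otherwise. An event is a tuple $e=\langle id,\tau,\mathsf{op}(\mathtt{ch},\mathsf{val})\rangle$ with a unique identifier $id$, a thread $\tau$, an operation $\mathsf{op}\in\{\mathtt{snd},\mathtt{rcv}\}$, a channel $\mathtt{ch}$ and a value $\mathsf{val}$. An execution is a finite sequence $\sigma$ of distinct events. $\sigma$ is well-formed (w.r.t. $\mathsf{cap}$) if: (i) for every asynchronous $\mathtt{ch}$ and every prefix $\pi$ of $\sigma$, $R_\pi(\mathtt{ch})\le S_\pi(\mathtt{ch})\le R_\pi(\mathtt{ch})+\mathsf{cap}(\mathtt{ch})$, where $S_\pi(\mathtt{ch})$, $R_\pi(\mathtt{ch})$ are the numbers of send, resp. receive, events on $\mathtt{ch}$ in $\pi$;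 (ii) for every synchronous $\mathtt{ch}$, every send on $\mathtt{ch}$ is immediately followed in $\sigma$ by a receive on $\mathtt{ch}$ of a different thread, and every receive on $\mathtt{ch}$ is immediately preceded in $\sigma$ by a send on $\mathtt{ch}$ of a different thread; (iii) for every channel $\mathtt{ch}$ and every $i$, if $\sigma$ contains an $i$-th receive on $\mathtt{ch}$, then the $i$-th send on $\mathtt{ch}$ has the same value as it. The program order $\mathsf{po}_\sigma$ is the set of pairs $(e,f)$ with $e$ before $f$ in $\sigma$ and in the same thread; the reads-from relation $\mathsf{rf}_\sigma$ is the set of pairs $(s,r)$ such that for some channel $\mathtt{ch}$ and some $i$, $s$ is the $i$-th send and $r$ the $i$-th receive on $\mathtt{ch}$ in $\sigma$. An abstract execution is $\mathcal{X}=\langle \mathsf{S},\mathsf{po}\rangle$ where $\mathsf{S}$ is a finite set of events and $\mathsf{po}$ is a strict order that totally orders the events of each thread and relates no events of different threads. An instance of $\textsf{VCh-rf}$ is $\langle\mathcal{X},\mathsf{cap},\mathsf{rf}\rangle$ where $\mathsf{cap}$ is a capacity function on the channels occurring in $\mathsf{S}$ and $\mathsf{rf}$ is a set of pairs $(s,r)$ of a send and a receive event of $\mathsf{S}$ on the same channel; it is consistent if there is an execution $\sigma$ whose set of events is $\mathsf{S}$, with $\mathsf{po}_\sigma=\mathsf{po}$, $\sigma$ well-formed, and $\mathsf{rf}_\sigma=\mathsf{rf}$. In this problem values are irrelevant (equivalently, matched events are assumed to carry equal values). Send-receive graph. $G_{\mathsf{sync}}=(V,E)$ is the directed graph with $V=\mathsf{rf}$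 (the set of matched pairs $\langle s,r\rangle$) and an edge from $\langle s_1,r_1\rangle$ to $\langle s_2,r_2\rangle$ iff some $e_1\in\{s_1,r_1\}$ is the immediate $\mathsf{po}$-predecessor of some $e_2\in\{s_2,r_2\}$. *)

theory Defs
  imports Main
begin

datatype operation = Snd | Rcv

datatype ('i, 't, 'c, 'v) event =
  Event (eid: 'i) (thr: 't) (eop: operation) (chan: 'c) (val: 'v)

type_synonym 'c capacity = "'c \<Rightarrow> nat"

definition sends_on :: "('i,'t,'c,'v) event list \<Rightarrow> 'c \<Rightarrow> ('i,'t,'c,'v) event list" where
  "sends_on \<pi> ch = filter (\<lambda>e. eop e = Snd \<and> chan e = ch) \<pi>"

definition rcvs_on :: "('i,'t,'c,'v) event list \<Rightarrow> 'c \<Rightarrow> ('i,'t,'c,'v) event list" where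
  "rcvs_on \<pi> ch = filter (\<lambda>e. eop e = Rcv \<and> chan e = ch) \<pi>"

definition well_formed :: "'c capacity \<Rightarrow> ('i,'t,'c,'v) event list \<Rightarrow> bool" where
  "well_formed cap \<sigma> \<longleftrightarrow>
     (\<forall>ch. cap ch > 0 \<longrightarrow> (\<forall>k \<le> length \<sigma>.
        length (rcvs_on (take k \<sigma>) ch) \<le> length (sends_on (take k \<sigma>) ch) \<and>
        length (sends_on (take k \<sigma>) ch) \<le> length (rcvs_on (take k \<sigma>) ch) + cap ch)) \<and>
     (\<forall>i < length \<sigma>. cap (chan (\<sigma>!i)) = 0 \<longrightarrow>
        (eop (\<sigma>!i) = Snd \<longrightarrow> Suc i < length \<sigma> \<and> eop (\<sigma>!Suc i) = Rcv \<and>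
            chan (\<sigma>!Suc i) = chan (\<sigma>!i) \<and> thr (\<sigma>!Suc i) \<noteq> thr (\<sigma>!i)) \<and>
        (eop (\<sigma>!i) = Rcv \<longrightarrow> 0 < i \<and> eop (\<sigma>!(i-1)) = Snd \<and>
            chan (\<sigma>!(i-1)) = chan (\<sigma>!i) \<and> thr (\<sigma>!(i-1)) \<noteq> thr (\<sigma>!i))) \<and>
     (\<forall>ch i. i < length (rcvs_on \<sigma> ch) \<longrightarrow>
        i < length (sends_on \<sigma> ch) \<and> val (sends_on \<sigma> ch ! i) = val (rcvs_on \<sigma> ch ! i))"

definition po_of :: "('i,'t,'c,'v) event list \<Rightarrow> (('i,'t,'c,'v) event \<times> ('i,'t,'c,'v) event) set" where
  "po_of \<sigma> = {(e, f). \<exists>i j. i < j \<and> j < length \<sigma> \<and> \<sigma>!i = e \<and> \<sigma>!j = f \<and> thr e = thr f}"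

definition rf_of :: "('i,'t,'c,'v) event list \<Rightarrow> (('i,'t,'c,'v) event \<times> ('i,'t,'c,'v) event) set" where
  "rf_of \<sigma> = {(s, r). \<exists>ch i. i < length (sends_on \<sigma> ch) \<and> i < length (rcvs_on \<sigma> ch) \<and>
                         s = sends_on \<sigma> ch ! i \<and> r = rcvs_on \<sigma> ch ! i}"

definition abstract_execution ::
  "('i,'t,'c,'v) event set \<Rightarrow> (('i,'t,'c,'v) event \<times> ('i,'t,'c,'v) event) set \<Rightarrow> bool" where
  "abstract_execution S po \<longleftrightarrow>
     finite S \<and> inj_on eid S \<and> po \<subseteq> S \<times> S \<and> irrefl po \<and> trans po \<and>
     (\<forall>e\<in>S. \<forall>f\<in>S. thr e = thr f \<and> e \<noteq> f \<longrightarrow> (e, f) \<in> po \<or> (f, e) \<in> po) \<and>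
     (\<forall>(e, f)\<in>po. thr e = thr f)"

text \<open>A VCh-rf instance \<open>\<langle>\<langle>S,po\<rangle>, cap, rf\<rangle>\<close> (cap is total; only its values on channels of S matter).\<close>
definition vch_rf_instance ::
  "('i,'t,'c,'v) event set \<Rightarrow> (('i,'t,'c,'v) event \<times> ('i,'t,'c,'v) event) set \<Rightarrow> 'c capacity
   \<Rightarrow> (('i,'t,'c,'v) event \<times> ('i,'t,'c,'v) event) set \<Rightarrow> bool" where
  "vch_rf_instance S po cap rf \<longleftrightarrow>
     abstract_execution S po \<and>
     (\<forall>(s, r)\<in>rf. s \<in> S \<and> r \<in> S \<and> eop s = Snd \<and> eop r = Rcv \<and> chan s = chan r)"

definition consistent ::
  "('i,'t,'c,'v) event set \<Rightarrow> (('i,'t,'c,'v) event \<times> ('i,'t,'c,'v) event) set \<Rightarrow> 'c capacity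
   \<Rightarrow> (('i,'t,'c,'v) event \<times> ('i,'t,'c,'v) event) set \<Rightarrow> bool" where
  "consistent S po cap rf \<longleftrightarrow>
     (\<exists>\<sigma>. distinct \<sigma> \<and> set \<sigma> = S \<and> po_of \<sigma> = po \<and> well_formed cap \<sigma> \<and> rf_of \<sigma> = rf)"

definition immediate_pred :: "('a \<times> 'a) set \<Rightarrow> 'a \<Rightarrow> 'a \<Rightarrow> bool" where
  "immediate_pred po e f \<longleftrightarrow> (e, f) \<in> po \<and> \<not> (\<exists>x. (e, x) \<in> po \<and> (x, f) \<in> po)"

definition G_sync :: "('a \<times> 'a) set \<Rightarrow> ('a \<times> 'a) set \<Rightarrow> (('a \<times> 'a) \<times> ('a \<times> 'a)) set" where
  "G_sync po rf = {((s1, r1), (s2, r2)). (s1, r1) \<in> rf \<and> (s2, r2) \<in> rf \<and>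
      (\<exists>e1\<in>{s1, r1}. \<exists>e2\<in>{s2, r2}. immediate_pred po e1 e2)}"

end

theory Submission
  imports Defs
begin

(* With only synchronous channels, a well-formed execution is forced to be a concatenation of
   adjacent blocks s r, where r receives the message of s in another thread, and its reads-from
   relation is exactly the list of these blocks. So a consistent execution is an enumeration of
   rf respecting program order. In a finite strict order every pair is linked by a chain of
   immediate predecessors, each of which is an edge of G_sync between the blocks of its ends.
   Hence the enumeration must be increasing along G_sync, which is then acyclic; conversely a
   topological enumeration of an acyclic G_sync respects every such chain, hence all of po. *)

section \<open>Linear extensions of finite orders\<close>

lemma acyclicI_list_order:
  assumes "R \<subseteq> set ps \<times> set ps"
    and "\<And>i j. i < length ps \<Longrightarrow> j < length ps \<Longrightarrow> (ps ! i, ps ! j) \<in> R \<Longrightarrow> i < j"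
  shows "acyclic R"
proof -
  have "\<forall>x\<in>set ps. \<exists>i. i < length ps \<and> ps ! i = x" by (simp add: in_set_conv_nth)
  then obtain idx where idx: "\<forall>x\<in>set ps. idx x < length ps \<and> ps ! idx x = x"
    by (rule bchoice[elim_format]) blast
  have step: "idx x < idx y" if "(x, y) \<in> R" for x y
  proof -
    have "x \<in> set ps" "y \<in> set ps" using that assms(1) by auto
    then show ?thesis using assms(2)[of "idx x" "idx y"] idx that by simp
  qed
  have "idx x < idx y" if "(x, y) \<in> R\<^sup>+" for x y
    using that by (induction rule: trancl_induct) (use step less_trans in blast)+
  then show ?thesis unfolding acyclic_def by blast
qed

lemma ex_enumeration_respecting_wf:
  assumes "finite V" and "wf R"
  shows "\<exists>ps. distinct ps \<and> set ps = V \<and>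
    (\<forall>i<length ps. \<forall>j<length ps. (ps ! i, ps ! j) \<in> R \<longrightarrow> i < j)"
  using assms(1)
proof (induction V rule: finite_remove_induct)
  case empty
  show ?case by (intro exI[of _ "[]"]) simp
next
  case (remove V)
  obtain z where z: "z \<in> V" "\<And>y. (y, z) \<in> R \<Longrightarrow> y \<notin> V"
    using wfE_min[OF assms(2)] \<open>V \<noteq> {}\<close> by blast
  obtain ps where ps: "distinct ps" "set ps = V - {z}"
      "\<forall>i<length ps. \<forall>j<length ps. (ps ! i, ps ! j) \<in> R \<longrightarrow> i < j"
    using remove.IH[OF z(1)] by blast
  show ?case
  proof (intro exI[of _ "z # ps"] conjI allI impI)
    show "distinct (z # ps)" using ps by simp
    show set_zps: "set (z # ps) = V" using ps(2) z(1) by auto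
    fix i j assume ij: "i < length (z # ps)" "j < length (z # ps)" "((z # ps) ! i, (z # ps) ! j) \<in> R"
    have "(z # ps) ! i \<in> V" using nth_mem[OF ij(1)] unfolding set_zps .
    then have "((z # ps) ! i, z) \<notin> R" using z(2) by blast
    then obtain j' where j': "j = Suc j'" using ij(3) by (cases j) auto
    show "i < j"
    proof (cases i)
      case (Suc i')
      then show ?thesis using ij ps(3) j' by simp
    qed (simp add: j')
  qed
qed

lemma trancl_immediate_pred:
  assumes "finite po" "irrefl po" "trans po" and "(e, f) \<in> po"
  shows "(e, f) \<in> {(x, y). immediate_pred po x y}\<^sup>+"
  using assms(4)
proof (induction "card {x. (e, x) \<in> po \<and> (x, f) \<in> po}" arbitrary: e f rule: less_induct)
  case less
  show ?case
  proof (cases "immediate_pred po e f")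
    case True
    then show ?thesis by auto
  next
    case False
    then obtain x where ex: "(e, x) \<in> po" and xf: "(x, f) \<in> po"
      using less.prems by (auto simp: immediate_pred_def)
    have "{y. (e, y) \<in> po \<and> (y, f) \<in> po} \<subseteq> snd ` po" by force
    then have fin: "finite {y. (e, y) \<in> po \<and> (y, f) \<in> po}"
      using assms(1) finite_subset by blast
    have x_between: "x \<in> {y. (e, y) \<in> po \<and> (y, f) \<in> po}" using ex xf by simp
    have x_irrefl: "(x, x) \<notin> po" using assms(2) by (simp add: irrefl_def)
    have "{y. (e, y) \<in> po \<and> (y, x) \<in> po} \<subset> {y. (e, y) \<in> po \<and> (y, f) \<in> po}"
      using x_between x_irrefl transD[OF assms(3) _ xf] by blast
    from less.hyps[OF psubset_card_mono[OF fin this] ex]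
    have "(e, x) \<in> {(x, y). immediate_pred po x y}\<^sup>+" .
    moreover have "{y. (x, y) \<in> po \<and> (y, f) \<in> po} \<subset> {y. (e, y) \<in> po \<and> (y, f) \<in> po}"
      using x_between x_irrefl transD[OF assms(3) ex] by blast
    from less.hyps[OF psubset_card_mono[OF fin this] xf]
    have "(x, f) \<in> {(x, y). immediate_pred po x y}\<^sup>+" .
    ultimately show ?thesis by (rule trancl_trans)
  qed
qed

lemma po_of_linear_extension:
  assumes "abstract_execution S po" "distinct \<sigma>" "set \<sigma> = S"
    and "\<And>i j. i < length \<sigma> \<Longrightarrow> j < length \<sigma> \<Longrightarrow> (\<sigma> ! i, \<sigma> ! j) \<in> po \<Longrightarrow> i < j"
  shows "po_of \<sigma> = po"
proof -
  have po_S: "po \<subseteq> S \<times> S" and po_thr: "\<forall>(e, f)\<in>po. thr e = thr f"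
    and total: "\<forall>e\<in>S. \<forall>f\<in>S. thr e = thr f \<and> e \<noteq> f \<longrightarrow> (e, f) \<in> po \<or> (f, e) \<in> po"
    using assms(1) unfolding abstract_execution_def by simp_all
  have po_iff: "(\<sigma> ! i, \<sigma> ! j) \<in> po \<longleftrightarrow> thr (\<sigma> ! i) = thr (\<sigma> ! j)"
    if ij: "i < j" "j < length \<sigma>" for i j
  proof
    assume "(\<sigma> ! i, \<sigma> ! j) \<in> po"
    then show "thr (\<sigma> ! i) = thr (\<sigma> ! j)" using po_thr by auto
  next
    assume same_thr: "thr (\<sigma> ! i) = thr (\<sigma> ! j)"
    have "\<sigma> ! i \<noteq> \<sigma> ! j" using ij nth_eq_iff_index_eq[OF assms(2)] by simp
    moreover have "\<sigma> ! i \<in> S" "\<sigma> ! j \<in> S" using ij assms(3) by auto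
    ultimately have "(\<sigma> ! i, \<sigma> ! j) \<in> po \<or> (\<sigma> ! j, \<sigma> ! i) \<in> po" using total same_thr by blast
    then show "(\<sigma> ! i, \<sigma> ! j) \<in> po" using assms(4)[of j i] ij by auto
  qed
  show ?thesis
  proof (intro equalityI subrelI)
    fix e f assume "(e, f) \<in> po_of \<sigma>"
    then obtain i j where "i < j" "j < length \<sigma>" "e = \<sigma> ! i" "f = \<sigma> ! j" "thr e = thr f"
      unfolding po_of_def by blast
    then show "(e, f) \<in> po" using po_iff by blast
  next
    fix e f assume ef: "(e, f) \<in> po"
    then have "e \<in> set \<sigma>" "f \<in> set \<sigma>" using po_S assms(3) by auto
    then obtain i j where ij: "i < length \<sigma>" "j < length \<sigma>" "e = \<sigma> ! i" "f = \<sigma> ! j"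
      by (metis in_set_conv_nth)
    then have "i < j" using assms(4) ef by blast
    then show "(e, f) \<in> po_of \<sigma>" using ij ef po_thr unfolding po_of_def by blast
  qed
qed

section \<open>Executions made of send-receive blocks\<close>

definition concat_pairs :: "('a \<times> 'a) list \<Rightarrow> 'a list" where
  "concat_pairs ps = concat (map (\<lambda>p. [fst p, snd p]) ps)"

lemma concat_pairs_Nil [simp]: "concat_pairs [] = []"
  and concat_pairs_Cons [simp]: "concat_pairs (p # ps) = fst p # snd p # concat_pairs ps"
  by (simp_all add: concat_pairs_def)

lemma length_concat_pairs [simp]: "length (concat_pairs ps) = 2 * length ps"
  by (induction ps) auto

lemma set_concat_pairs: "set (concat_pairs ps) = fst ` set ps \<union> snd ` set ps"
  by (induction ps) auto

lemma nth_concat_pairs_even: "k < length ps \<Longrightarrow> concat_pairs ps ! (2 * k) = fst (ps ! k)"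
  by (induction ps arbitrary: k) (auto simp: nth_Cons split: nat.splits)

lemma nth_concat_pairs_odd: "k < length ps \<Longrightarrow> concat_pairs ps ! Suc (2 * k) = snd (ps ! k)"
  by (induction ps arbitrary: k) (auto simp: nth_Cons split: nat.splits)

lemma nth_concat_pairs_mem:
  assumes "i < 2 * length ps"
  shows "concat_pairs ps ! i \<in> {fst (ps ! (i div 2)), snd (ps ! (i div 2))}"
proof -
  have k: "i div 2 < length ps" using assms by simp
  show ?thesis
  proof (cases "even i")
    case True
    then have "i = 2 * (i div 2)" by simp
    then show ?thesis using nth_concat_pairs_even[OF k] by (metis insertI1)
  next
    case False
    then have "i = Suc (2 * (i div 2))" by presburger
    then show ?thesis using nth_concat_pairs_odd[OF k] by (metis insertI1 insertI2)
  qed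
qed

lemma index_concat_pairs:
  assumes "distinct (concat_pairs ps)" "i < 2 * length ps" "k < length ps"
    and "concat_pairs ps ! i \<in> {fst (ps ! k), snd (ps ! k)}"
  shows "i = 2 * k \<or> i = Suc (2 * k)"
proof -
  have "2 * k < 2 * length ps" "Suc (2 * k) < 2 * length ps" using assms(3) by simp_all
  moreover have "concat_pairs ps ! i = concat_pairs ps ! (2 * k) \<or>
      concat_pairs ps ! i = concat_pairs ps ! Suc (2 * k)"
    using assms(4) nth_concat_pairs_even[OF assms(3)] nth_concat_pairs_odd[OF assms(3)] by auto
  ultimately show ?thesis
    using nth_eq_iff_index_eq[OF assms(1)] assms(2) by (metis length_concat_pairs)
qed

lemma distinct_concat_pairsI:
  assumes "distinct ps" "inj_on fst (set ps)" "inj_on snd (set ps)"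
    and "fst ` set ps \<inter> snd ` set ps = {}"
  shows "distinct (concat_pairs ps)"
  using assms
proof (induction ps)
  case (Cons p ps)
  then show ?case by (auto simp: set_concat_pairs inj_on_def)
qed simp

definition sync_pair :: "('i,'t,'c,'v) event \<times> ('i,'t,'c,'v) event \<Rightarrow> bool" where
  "sync_pair p \<longleftrightarrow> eop (fst p) = Snd \<and> eop (snd p) = Rcv \<and> chan (fst p) = chan (snd p) \<and>
     thr (fst p) \<noteq> thr (snd p)"

lemma sends_on_concat_pairs:
  "\<forall>p\<in>set ps. sync_pair p \<Longrightarrow>
   sends_on (concat_pairs ps) ch = map fst (filter (\<lambda>p. chan (fst p) = ch) ps)"
  by (induction ps) (auto simp: sends_on_def sync_pair_def)

lemma rcvs_on_concat_pairs:
  "\<forall>p\<in>set ps. sync_pair p \<Longrightarrow>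
   rcvs_on (concat_pairs ps) ch = map snd (filter (\<lambda>p. chan (fst p) = ch) ps)"
  by (induction ps) (auto simp: rcvs_on_def sync_pair_def)

lemma rf_of_concat_pairs:
  assumes "\<forall>p\<in>set ps. sync_pair p"
  shows "rf_of (concat_pairs ps) = set ps"
proof (intro set_eqI iffI)
  fix p assume "p \<in> rf_of (concat_pairs ps)"
  then obtain ch i where "i < length (filter (\<lambda>p. chan (fst p) = ch) ps)"
      "p = filter (\<lambda>p. chan (fst p) = ch) ps ! i"
    unfolding rf_of_def sends_on_concat_pairs[OF assms] rcvs_on_concat_pairs[OF assms] by auto
  then show "p \<in> set ps" by (metis nth_mem filter_is_subset subsetD)
next
  fix p assume "p \<in> set ps"
  then have "p \<in> set (filter (\<lambda>q. chan (fst q) = chan (fst p)) ps)" by simp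
  then obtain i where "i < length (filter (\<lambda>q. chan (fst q) = chan (fst p)) ps)"
      "filter (\<lambda>q. chan (fst q) = chan (fst p)) ps ! i = p"
    by (metis in_set_conv_nth)
  then show "p \<in> rf_of (concat_pairs ps)"
    unfolding rf_of_def sends_on_concat_pairs[OF assms] rcvs_on_concat_pairs[OF assms]
    by (auto intro!: exI[of _ "chan (fst p)"] exI[of _ i])
qed

definition rendezvous :: "'c capacity \<Rightarrow> ('i,'t,'c,'v) event list \<Rightarrow> bool" where
  "rendezvous cap \<sigma> \<longleftrightarrow> (\<forall>i < length \<sigma>. cap (chan (\<sigma>!i)) = 0 \<longrightarrow>
     (eop (\<sigma>!i) = Snd \<longrightarrow> Suc i < length \<sigma> \<and> eop (\<sigma>!Suc i) = Rcv \<and>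
        chan (\<sigma>!Suc i) = chan (\<sigma>!i) \<and> thr (\<sigma>!Suc i) \<noteq> thr (\<sigma>!i)) \<and>
     (eop (\<sigma>!i) = Rcv \<longrightarrow> 0 < i \<and> eop (\<sigma>!(i-1)) = Snd \<and>
        chan (\<sigma>!(i-1)) = chan (\<sigma>!i) \<and> thr (\<sigma>!(i-1)) \<noteq> thr (\<sigma>!i)))"

lemma well_formed_iff_rendezvous:
  "well_formed cap \<sigma> \<longleftrightarrow>
     (\<forall>ch. cap ch > 0 \<longrightarrow> (\<forall>k \<le> length \<sigma>.
        length (rcvs_on (take k \<sigma>) ch) \<le> length (sends_on (take k \<sigma>) ch) \<and>
        length (sends_on (take k \<sigma>) ch) \<le> length (rcvs_on (take k \<sigma>) ch) + cap ch)) \<and>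
     rendezvous cap \<sigma> \<and>
     (\<forall>ch i. i < length (rcvs_on \<sigma> ch) \<longrightarrow>
        i < length (sends_on \<sigma> ch) \<and> val (sends_on \<sigma> ch ! i) = val (rcvs_on \<sigma> ch ! i))"
  unfolding well_formed_def rendezvous_def ..

lemma rendezvous_concat_pairs:
  assumes "\<forall>p\<in>set ps. sync_pair p"
  shows "rendezvous cap (concat_pairs ps)"
  unfolding rendezvous_def
proof (intro allI impI conjI)
  fix i assume i: "i < length (concat_pairs ps)"
  define k where "k = i div 2"
  have k: "k < length ps" using i by (simp add: k_def)
  have sp: "sync_pair (ps ! k)" using assms k by simp
  have ev: "concat_pairs ps ! (2 * k) = fst (ps ! k)" and od: "concat_pairs ps ! Suc (2 * k) = snd (ps ! k)"
    using nth_concat_pairs_even[OF k] nth_concat_pairs_odd[OF k] .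
  have i_cases: "i = 2 * k \<or> i = Suc (2 * k)" unfolding k_def by presburger
  { assume snd_i: "eop (concat_pairs ps ! i) = Snd"
    then have "i = 2 * k" using i_cases sp od by (auto simp: sync_pair_def)
    then show "Suc i < length (concat_pairs ps)" "eop (concat_pairs ps ! Suc i) = Rcv"
      "chan (concat_pairs ps ! Suc i) = chan (concat_pairs ps ! i)"
      "thr (concat_pairs ps ! Suc i) \<noteq> thr (concat_pairs ps ! i)"
      using k sp ev od by (auto simp: sync_pair_def) }
  { assume rcv_i: "eop (concat_pairs ps ! i) = Rcv"
    then have "i = Suc (2 * k)" using i_cases sp ev by (auto simp: sync_pair_def)
    then show "0 < i" "eop (concat_pairs ps ! (i - 1)) = Snd"
      "chan (concat_pairs ps ! (i - 1)) = chan (concat_pairs ps ! i)"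
      "thr (concat_pairs ps ! (i - 1)) \<noteq> thr (concat_pairs ps ! i)"
      using sp ev od by (auto simp: sync_pair_def) }
qed

lemma rendezvous_Cons_Cons:
  assumes "rendezvous cap (x # y # \<sigma>)" and "eop y = Rcv"
  shows "rendezvous cap \<sigma>"
  unfolding rendezvous_def
proof (intro allI impI)
  fix i assume "i < length \<sigma>" "cap (chan (\<sigma> ! i)) = 0"
  then have "(eop (\<sigma>!i) = Snd \<longrightarrow> Suc i < length \<sigma> \<and> eop (\<sigma>!Suc i) = Rcv \<and>
        chan (\<sigma>!Suc i) = chan (\<sigma>!i) \<and> thr (\<sigma>!Suc i) \<noteq> thr (\<sigma>!i)) \<and>
     (eop (\<sigma>!i) = Rcv \<longrightarrow> eop ((y # \<sigma>)!i) = Snd \<and>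
        chan ((y # \<sigma>)!i) = chan (\<sigma>!i) \<and> thr ((y # \<sigma>)!i) \<noteq> thr (\<sigma>!i))"
    using assms(1)[unfolded rendezvous_def, rule_format, of "Suc (Suc i)"] by simp
  then show "(eop (\<sigma>!i) = Snd \<longrightarrow> Suc i < length \<sigma> \<and> eop (\<sigma>!Suc i) = Rcv \<and>
        chan (\<sigma>!Suc i) = chan (\<sigma>!i) \<and> thr (\<sigma>!Suc i) \<noteq> thr (\<sigma>!i)) \<and>
     (eop (\<sigma>!i) = Rcv \<longrightarrow> 0 < i \<and> eop (\<sigma>!(i-1)) = Snd \<and>
        chan (\<sigma>!(i-1)) = chan (\<sigma>!i) \<and> thr (\<sigma>!(i-1)) \<noteq> thr (\<sigma>!i))"
    using assms(2) by (cases i) auto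
qed

lemma rendezvous_imp_concat_pairs:
  assumes "\<forall>e\<in>set \<sigma>. cap (chan e) = 0" and "rendezvous cap \<sigma>"
  shows "\<exists>ps. \<sigma> = concat_pairs ps \<and> (\<forall>p\<in>set ps. sync_pair p)"
  using assms
proof (induction \<sigma> rule: induct_list012)
  case 1
  show ?case by (intro exI[of _ "[]"]) simp
next
  case (2 x)
  then show ?case by (cases "eop x") (auto simp: rendezvous_def)
next
  case (3 x y \<sigma>)
  have "(eop x = Snd \<longrightarrow> eop y = Rcv \<and> chan y = chan x \<and> thr y \<noteq> thr x) \<and> eop x \<noteq> Rcv"
    using "3.prems" unfolding rendezvous_def by (auto dest: spec[of _ 0])
  then have xy: "sync_pair (x, y)" by (cases "eop x") (auto simp: sync_pair_def)
  then have "rendezvous cap \<sigma>"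
    using rendezvous_Cons_Cons[OF "3.prems"(2)] by (simp add: sync_pair_def)
  then obtain ps where "\<sigma> = concat_pairs ps" "\<forall>p\<in>set ps. sync_pair p"
    using "3.IH"(1) "3.prems"(1) by auto
  then show ?case using xy by (intro exI[of _ "(x, y) # ps"]) simp
qed

lemma well_formed_concat_pairs:
  assumes "\<forall>p\<in>set ps. sync_pair p \<and> cap (chan (fst p)) = 0 \<and> val (fst p) = val (snd p)"
  shows "well_formed cap (concat_pairs ps)"
  unfolding well_formed_iff_rendezvous
proof (intro conjI allI impI)
  have sp: "\<forall>p\<in>set ps. sync_pair p" using assms by simp
  then show "rendezvous cap (concat_pairs ps)" by (rule rendezvous_concat_pairs)
  have "\<forall>e\<in>set (concat_pairs ps). cap (chan e) = 0"
    using assms by (auto simp: set_concat_pairs sync_pair_def)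
  then have "sends_on (take k (concat_pairs ps)) ch = [] \<and> rcvs_on (take k (concat_pairs ps)) ch = []"
    if "cap ch > 0" for k ch
    using that by (auto simp: sends_on_def rcvs_on_def filter_empty_conv dest: in_set_takeD)
  then show "length (rcvs_on (take k (concat_pairs ps)) ch) \<le> length (sends_on (take k (concat_pairs ps)) ch)"
    and "length (sends_on (take k (concat_pairs ps)) ch) \<le> length (rcvs_on (take k (concat_pairs ps)) ch) + cap ch"
    if "cap ch > 0" for k ch
    using that by simp_all
  fix ch i assume "i < length (rcvs_on (concat_pairs ps) ch)"
  then have i: "i < length (filter (\<lambda>p. chan (fst p) = ch) ps)"
    by (simp add: rcvs_on_concat_pairs[OF sp])
  then have "filter (\<lambda>p. chan (fst p) = ch) ps ! i \<in> set ps" by (metis nth_mem filter_is_subset subsetD)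
  then show "i < length (sends_on (concat_pairs ps) ch)"
    and "val (sends_on (concat_pairs ps) ch ! i) = val (rcvs_on (concat_pairs ps) ch ! i)"
    using i assms by (simp_all add: rcvs_on_concat_pairs[OF sp] sends_on_concat_pairs[OF sp])
qed

lemma rf_perfect_matching:
  assumes rf_S: "\<forall>(s, r)\<in>rf. s \<in> S \<and> r \<in> S \<and> eop s = Snd \<and> eop r = Rcv"
    and snd_matched: "\<forall>s\<in>S. eop s = Snd \<longrightarrow> (\<exists>!r. (s, r) \<in> rf)"
    and rcv_matched: "\<forall>r\<in>S. eop r = Rcv \<longrightarrow> (\<exists>!s. (s, r) \<in> rf)"
  shows "fst ` rf \<union> snd ` rf = S" and "inj_on fst rf" and "inj_on snd rf"
proof -
  have "x \<in> fst ` rf \<union> snd ` rf" if x: "x \<in> S" for x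
  proof (cases "eop x")
    case Snd
    then obtain r where "(x, r) \<in> rf" using snd_matched x by blast
    then show ?thesis by force
  next
    case Rcv
    then obtain s where "(s, x) \<in> rf" using rcv_matched x by blast
    then show ?thesis by force
  qed
  then show "fst ` rf \<union> snd ` rf = S" using rf_S by auto
  show "inj_on fst rf"
  proof (rule inj_onI)
    fix p q assume pq: "p \<in> rf" "q \<in> rf" "fst p = fst q"
    then have "(fst p, snd p) \<in> rf" "(fst p, snd q) \<in> rf" "fst p \<in> S" "eop (fst p) = Snd"
      using rf_S by auto
    then have "snd p = snd q" using snd_matched by blast
    then show "p = q" using pq(3) by (simp add: prod_eq_iff)
  qed
  show "inj_on snd rf"
  proof (rule inj_onI)
    fix p q assume pq: "p \<in> rf" "q \<in> rf" "snd p = snd q"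
    then have "(fst p, snd p) \<in> rf" "(fst q, snd p) \<in> rf" "snd p \<in> S" "eop (snd p) = Rcv"
      using rf_S by auto
    then have "fst p = fst q" using rcv_matched by blast
    then show "p = q" using pq(3) by (simp add: prod_eq_iff)
  qed
qed

section \<open>The send-receive graph\<close>

lemma G_sync_iff:
  "(A, B) \<in> G_sync po rf \<longleftrightarrow> A \<in> rf \<and> B \<in> rf \<and>
     (\<exists>e\<in>{fst A, snd A}. \<exists>f\<in>{fst B, snd B}. immediate_pred po e f)"
  by (cases A; cases B) (simp add: G_sync_def)

lemma G_sync_trancl_if_po:
  assumes "finite po" "irrefl po" "trans po" and cover: "Field po \<subseteq> fst ` rf \<union> snd ` rf"
    and "(e, f) \<in> po" "A \<in> rf" "e \<in> {fst A, snd A}"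
  shows "B \<in> rf \<Longrightarrow> f \<in> {fst B, snd B} \<Longrightarrow> (A, B) \<in> (G_sync po rf)\<^sup>+"
  using trancl_immediate_pred[OF assms(1-3,5)]
proof (induction arbitrary: B rule: trancl_induct)
  case (base f)
  then show ?case using assms(6,7) by (auto simp: G_sync_iff)
next
  case (step y f)
  then have "y \<in> Field po" by (auto simp: immediate_pred_def Field_def)
  then obtain C where C: "C \<in> rf" "y \<in> {fst C, snd C}" using cover by force
  then have "(A, C) \<in> (G_sync po rf)\<^sup>+" by (rule step.IH)
  moreover have "(C, B) \<in> G_sync po rf" using C step by (auto simp: G_sync_iff)
  ultimately show ?case by (rule trancl_into_trancl)
qed

lemma po_of_concat_pairs_index_less:
  assumes "distinct (concat_pairs ps)" "\<forall>p\<in>set ps. thr (fst p) \<noteq> thr (snd p)"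
    and "i < length ps" "j < length ps"
    and "e \<in> {fst (ps ! i), snd (ps ! i)}" "f \<in> {fst (ps ! j), snd (ps ! j)}"
    and "(e, f) \<in> po_of (concat_pairs ps)"
  shows "i < j"
proof -
  obtain a b where ab: "a < b" "b < 2 * length ps" "concat_pairs ps ! a = e"
      "concat_pairs ps ! b = f" "thr e = thr f"
    using assms(7) unfolding po_of_def by auto
  have a: "a = 2 * i \<or> a = Suc (2 * i)"
    using index_concat_pairs[OF assms(1) _ assms(3)] ab assms(5) by simp
  have b: "b = 2 * j \<or> b = Suc (2 * j)"
    using index_concat_pairs[OF assms(1) _ assms(4)] ab assms(6) by simp
  show "i < j"
  proof (rule ccontr)
    assume "\<not> i < j"
    with a b ab(1) have "a = 2 * i" "b = Suc (2 * i)" "j = i" by auto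
    then have "e = fst (ps ! i)" "f = snd (ps ! i)"
      using ab(3,4) nth_concat_pairs_even[OF assms(3)] nth_concat_pairs_odd[OF assms(3)] by auto
    then show False using ab(5) assms(2,3) by auto
  qed
qed

lemma concat_pairs_index_less_if_po:
  assumes "finite po" "irrefl po" "trans po" and "Field po \<subseteq> fst ` set ps \<union> snd ` set ps"
    and topo: "\<forall>i<length ps. \<forall>j<length ps. (ps ! i, ps ! j) \<in> (G_sync po (set ps))\<^sup>+ \<longrightarrow> i < j"
    and ab: "a < length (concat_pairs ps)" "b < length (concat_pairs ps)"
    and po_ab: "(concat_pairs ps ! a, concat_pairs ps ! b) \<in> po"
  shows "a < b"
proof -
  have k: "a div 2 < length ps" "b div 2 < length ps" using ab by simp_all
  then have "ps ! (a div 2) \<in> set ps" "ps ! (b div 2) \<in> set ps" by simp_all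
  then have "(ps ! (a div 2), ps ! (b div 2)) \<in> (G_sync po (set ps))\<^sup>+"
    using G_sync_trancl_if_po[OF assms(1-4) po_ab _ nth_concat_pairs_mem _ nth_concat_pairs_mem] ab
    by simp
  then have "a div 2 < b div 2" using topo k by blast
  then show "a < b" by (metis div_le_mono not_le)
qed

lemma consistent_imp_acyclic_G_sync:
  assumes "consistent S po cap rf" and "\<forall>e\<in>S. cap (chan e) = 0"
  shows "acyclic (G_sync po rf)"
proof -
  obtain \<sigma> where \<sigma>: "distinct \<sigma>" "set \<sigma> = S" "po_of \<sigma> = po" "well_formed cap \<sigma>" "rf_of \<sigma> = rf"
    using assms(1) unfolding consistent_def by blast
  have "rendezvous cap \<sigma>" using \<sigma>(4) by (simp add: well_formed_iff_rendezvous)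
  then obtain ps where ps: "\<sigma> = concat_pairs ps" "\<forall>p\<in>set ps. sync_pair p"
    using rendezvous_imp_concat_pairs \<sigma>(2) assms(2) by blast
  have rf: "rf = set ps" using \<sigma>(5) rf_of_concat_pairs[OF ps(2)] ps(1) by simp
  show ?thesis
  proof (rule acyclicI_list_order)
    show "G_sync po rf \<subseteq> set ps \<times> set ps" using rf by (auto simp: G_sync_def)
    fix i j assume ij: "i < length ps" "j < length ps" "(ps ! i, ps ! j) \<in> G_sync po rf"
    then obtain e f where "e \<in> {fst (ps ! i), snd (ps ! i)}" "f \<in> {fst (ps ! j), snd (ps ! j)}"
        "(e, f) \<in> po_of (concat_pairs ps)"
      using \<sigma>(3) ps(1) by (auto simp: G_sync_iff immediate_pred_def)
    moreover have "\<forall>p\<in>set ps. thr (fst p) \<noteq> thr (snd p)" using ps(2) by (simp add: sync_pair_def)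
    ultimately show "i < j" using po_of_concat_pairs_index_less \<sigma>(1) ps(1) ij(1,2) by blast
  qed
qed

lemma acyclic_G_sync_imp_consistent:
  assumes ae: "abstract_execution S po"
    and rf_pairs: "\<forall>p\<in>rf. sync_pair p \<and> cap (chan (fst p)) = 0 \<and> val (fst p) = val (snd p)"
    and S_eq: "fst ` rf \<union> snd ` rf = S" and inj: "inj_on fst rf" "inj_on snd rf"
    and acyclic: "acyclic (G_sync po rf)"
  shows "consistent S po cap rf"
proof -
  have fin_S: "finite S" and po_S: "po \<subseteq> S \<times> S" and irrefl: "irrefl po" and trans: "trans po"
    using ae unfolding abstract_execution_def by simp_all
  have fin_po: "finite po" using finite_subset[OF po_S] fin_S by simp
  have po_Field: "Field po \<subseteq> fst ` rf \<union> snd ` rf" using po_S S_eq unfolding Field_def by blast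
  have "fst ` rf \<subseteq> S" using S_eq by blast
  then have "finite (fst ` rf)" using fin_S by (rule finite_subset)
  then have "finite rf" by (rule finite_imageD[OF _ inj(1)])
  moreover have "G_sync po rf \<subseteq> rf \<times> rf" by (auto simp: G_sync_def)
  ultimately have "finite (G_sync po rf)" by (simp add: finite_subset)
  then have "wf ((G_sync po rf)\<^sup>+)" using acyclic by (intro wf_trancl finite_acyclic_wf)
  from ex_enumeration_respecting_wf[OF \<open>finite rf\<close> this]
  obtain ps where ps: "distinct ps" "set ps = rf"
      "\<forall>i<length ps. \<forall>j<length ps. (ps ! i, ps ! j) \<in> (G_sync po rf)\<^sup>+ \<longrightarrow> i < j"
    by blast
  have sp: "\<forall>p\<in>set ps. sync_pair p" using rf_pairs ps(2) by simp
  have "eop (fst p) \<noteq> eop (snd q)" if "p \<in> set ps" "q \<in> set ps" for p q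
    using sp that by (simp add: sync_pair_def)
  then have "fst ` set ps \<inter> snd ` set ps = {}" by force
  then have distinct: "distinct (concat_pairs ps)"
    using distinct_concat_pairsI[OF ps(1)] ps(2) inj by simp
  have set: "set (concat_pairs ps) = S" using S_eq ps(2) by (simp add: set_concat_pairs)
  have "a < b" if "a < length (concat_pairs ps)" "b < length (concat_pairs ps)"
    and "(concat_pairs ps ! a, concat_pairs ps ! b) \<in> po" for a b
    using concat_pairs_index_less_if_po[OF fin_po irrefl trans, where ps = ps, unfolded ps(2),
        OF po_Field ps(3) that] .
  then have "po_of (concat_pairs ps) = po" using po_of_linear_extension[OF ae distinct set] by blast
  moreover have "well_formed cap (concat_pairs ps)" using rf_pairs ps(2) by (simp add: well_formed_concat_pairs)
  moreover have "rf_of (concat_pairs ps) = rf" using rf_of_concat_pairs[OF sp] ps(2) by simp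
  ultimately show ?thesis unfolding consistent_def using distinct set by blast
qed

theorem mainTheorem10:
  fixes S :: "('i,'t,'c,'v) event set"
    and po rf :: "(('i,'t,'c,'v) event \<times> ('i,'t,'c,'v) event) set"
    and cap :: "'c \<Rightarrow> nat"
  assumes inst: "vch_rf_instance S po cap rf"
    and sync: "\<forall>e\<in>S. cap (chan e) = 0"
    and snd_matched: "\<forall>s\<in>S. eop s = Snd \<longrightarrow> (\<exists>!r. (s, r) \<in> rf)"
    and rcv_matched: "\<forall>r\<in>S. eop r = Rcv \<longrightarrow> (\<exists>!s. (s, r) \<in> rf)"
    and diff_thr: "\<forall>(s, r)\<in>rf. thr s \<noteq> thr r"
    and same_val: "\<forall>(s, r)\<in>rf. val s = val r"
  shows "consistent S po cap rf \<longleftrightarrow> acyclic (G_sync po rf)"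
proof -
  have ae: "abstract_execution S po"
    and rf_S: "\<forall>(s, r)\<in>rf. s \<in> S \<and> r \<in> S \<and> eop s = Snd \<and> eop r = Rcv \<and> chan s = chan r"
    using inst unfolding vch_rf_instance_def by simp_all
  have rf_pairs: "\<forall>p\<in>rf. sync_pair p \<and> cap (chan (fst p)) = 0 \<and> val (fst p) = val (snd p)"
    using rf_S sync diff_thr same_val by (auto simp: sync_pair_def)
  have "\<forall>(s, r)\<in>rf. s \<in> S \<and> r \<in> S \<and> eop s = Snd \<and> eop r = Rcv" using rf_S by auto
  note matching = rf_perfect_matching[OF this snd_matched rcv_matched]
  show ?thesis
    using consistent_imp_acyclic_G_sync[OF _ sync]
      acyclic_G_sync_imp_consistent[OF ae rf_pairs matching] by blast
qed

end
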